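(* Let $r\ge 2$ and let $K$ be a basic $r$-hole. Then: (1) $K$ is $(r-1)$-path connected; (2) $d_K(F)\ge 2$ for every $(r-1)$-face $F$ of $K$; (3) for every $r$-face $\bar F$ of $K$, the complex $K-\bar F$ is $(r-1)$-path connected.
   Context: A (finite abstract) simplicial complex $K$ on a finite vertex set $V(K)$ is a family of subsets of $V(K)$ closed under taking subsets and containing every singleton; an $i$-face is a member of cardinality $i+1$; $S_i(K)$ is the set of $i$-faces; facets are inclusion-maximal faces; $K$ is pure if all facets have the same dimension. For an $i$-face $F$, $d_K(F)$ is the number of $(i+1)$-faces of $K$ containing $F$. Two distinct $i$-faces are up-neighbors if their union is an $(i+1)$-face of $K$. $K$ is $i$-path connected if for any two $i$-faces $F,G$ of $K$ there is a sequence $F=F_1,F_2,\dots,F_m=G$ of $i$-faces in which consecutive terms are up-neighbors. $\beta_r(K)=\dim_{\mathbb R}H_r(K;\mathbb R)$ is the $r$-th Betti number (simplicial homology with real coefficients). A basic $r$-hole is a pure $r$-dimensional complex $K$ with $\beta_r(K)=1$ such that for every $r$-face $\bar F$, the complex $K-\bar F$ obtained by deleting only the face $\bar F$ (keeping all its proper subsets) satisfies $\beta_r(K-\bar F)=0$. *)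

theory Defs
  imports Complex_Main "HOL-Library.Function_Algebras"
begin

text \<open>A finite abstract simplicial complex, given as its family of faces
  (the vertex set is the union of the faces, so every vertex singleton is a face).\<close>
definition simplicial_complex :: "'a set set \<Rightarrow> bool" where
  "simplicial_complex K \<longleftrightarrow> finite K \<and> (\<forall>F\<in>K. \<forall>G. G \<subseteq> F \<longrightarrow> G \<in> K)"

definition vertices :: "'a set set \<Rightarrow> 'a set" where
  "vertices K = \<Union>K"

definition faces :: "'a set set \<Rightarrow> nat \<Rightarrow> 'a set set" where
  "faces K i = {F \<in> K. card F = i + 1}"

definition facets :: "'a set set \<Rightarrow> 'a set set" where
  "facets K = {F \<in> K. \<forall>G\<in>K. F \<subseteq> G \<longrightarrow> G = F}"

definition pure_dim :: "'a set set \<Rightarrow> nat \<Rightarrow> bool" where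
  "pure_dim K r \<longleftrightarrow> (\<forall>F\<in>facets K. card F = r + 1)"

definition degree :: "'a set set \<Rightarrow> 'a set \<Rightarrow> nat" where
  "degree K F = card {G \<in> K. F \<subseteq> G \<and> card G = card F + 1}"

definition up_neighbors :: "'a set set \<Rightarrow> nat \<Rightarrow> 'a set \<Rightarrow> 'a set \<Rightarrow> bool" where
  "up_neighbors K i F G \<longleftrightarrow> F \<in> faces K i \<and> G \<in> faces K i \<and> F \<noteq> G \<and> F \<union> G \<in> faces K (i + 1)"

definition path_connected_i :: "'a set set \<Rightarrow> nat \<Rightarrow> bool" where
  "path_connected_i K i \<longleftrightarrow>
     (\<forall>F\<in>faces K i. \<forall>G\<in>faces K i. \<exists>ps. ps \<noteq> [] \<and> hd ps = F \<and> last ps = G \<and>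
        set ps \<subseteq> faces K i \<and> (\<forall>j. Suc j < length ps \<longrightarrow> up_neighbors K i (ps ! j) (ps ! Suc j)))"

text \<open>Orientation of faces is induced by the linear order on vertices.
  Real i-chains: real functions on sets of vertices vanishing outside the i-faces.\<close>
definition chains :: "'a set set \<Rightarrow> nat \<Rightarrow> ('a set \<Rightarrow> real) set" where
  "chains K i = {c. \<forall>F. F \<notin> faces K i \<longrightarrow> c F = 0}"

definition incidence :: "'a::linorder set \<Rightarrow> 'a set \<Rightarrow> real" where
  "incidence F G = (-1) ^ card {v \<in> F. v < the_elem (F - G)}"

definition bd :: "'a::linorder set set \<Rightarrow> nat \<Rightarrow> ('a set \<Rightarrow> real) \<Rightarrow> ('a set \<Rightarrow> real)" where
  "bd K i c = (\<lambda>G. if G \<in> faces K i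
      then (\<Sum>F\<in>{F \<in> faces K (i + 1). G \<subseteq> F}. incidence F G * c F) else 0)"

definition cycles :: "'a::linorder set set \<Rightarrow> nat \<Rightarrow> ('a set \<Rightarrow> real) set" where
  "cycles K r = {c \<in> chains K r. r = 0 \<or> bd K (r - 1) c = (\<lambda>_. 0)}"

definition boundaries :: "'a::linorder set set \<Rightarrow> nat \<Rightarrow> ('a set \<Rightarrow> real) set" where
  "boundaries K r = bd K r ` chains K (r + 1)"

definition fscale :: "real \<Rightarrow> ('a set \<Rightarrow> real) \<Rightarrow> ('a set \<Rightarrow> real)" where
  "fscale a c = (\<lambda>x. a * c x)"

text \<open>r-th Betti number: dim Z_r - dim B_r (= dim of H_r(K;R), since B_r is a subspace of Z_r).\<close>
definition betti :: "'a::linorder set set \<Rightarrow> nat \<Rightarrow> nat" where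
  "betti K r = vector_space.dim fscale (cycles K r) - vector_space.dim fscale (boundaries K r)"

definition basic_hole :: "'a::linorder set set \<Rightarrow> nat \<Rightarrow> bool" where
  "basic_hole K r \<longleftrightarrow> simplicial_complex K \<and> pure_dim K r \<and> betti K r = 1 \<and>
     (\<forall>F\<in>faces K r. betti (K - {F}) r = 0)"

end

theory Submission
  imports Defs "HOL-Library.Indicator_Function"
begin

text \<open>
  Since a pure r-dimensional complex has no (r+1)-faces, its r-cycles form a line, spanned by a
  cycle z. Minimality forces z to be nonzero on every r-face F, for otherwise z would be a nonzero
  r-cycle of K - F. An (r-1)-face lying in a single r-face would therefore have a nonzero
  coefficient in the boundary of z, so every (r-1)-face lies in at least two r-faces. Restricting z
  to a class of r-faces that is closed under sharing (r-1)-faces again gives a cycle, hence a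
  multiple of z, so that class contains every r-face: the r-faces, and with them the (r-1)-faces,
  are connected.

  In K - F, restrict z to such a class T of r-faces different from F. Its boundary c is supported
  on the (r-1)-faces of F that meet T, and c is a cycle. T meets some (r-1)-face of F, since
  otherwise T would be closed in K. Comparing coefficients of c at the common (r-2)-face of two
  (r-1)-faces of F (this needs r >= 2) shows that c is nonzero on all of them. So every class meets
  every (r-1)-face of F, and any two classes are linked through such a face.
\<close>

section \<open>Linear algebra of real chains\<close>

context vector_space
begin

lemma dim_eq_0_imp_subset_zero:
  assumes "V \<subseteq> span W" "finite W" "dim V = 0"
  shows "V \<subseteq> {0}"
proof -
  obtain B where B: "B \<subseteq> V" "independent B" "V \<subseteq> span B" "card B = dim V"
    by (rule basis_exists)
  have "finite B"
    using independent_span_bound[OF assms(2) B(2)] B(1) assms(1) by blast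
  with B(4) assms(3) have "B = {}" by simp
  with B(3) show ?thesis by simp
qed

lemma dim_eq_1_imp_generator:
  assumes "dim V = 1"
  obtains z where "z \<in> V" "z \<noteq> 0" "\<And>v. v \<in> V \<Longrightarrow> \<exists>a. v = scale a z"
proof -
  obtain B where B: "B \<subseteq> V" "independent B" "V \<subseteq> span B" "card B = dim V"
    by (rule basis_exists)
  then obtain z where "B = {z}"
    using assms card_1_singletonE by metis
  with B show ?thesis
    by (intro that) (auto simp: span_singleton)
qed

lemma dim_zero_singleton: "dim {0} = 0"
  using basis_card_eq_dim[of "{}" "{0}"] independent_empty by simp

end

lemma sum_apply: "(\<Sum>a\<in>A. f a) x = (\<Sum>a\<in>A. f a x)"
  by (induction A rule: infinite_finite_induct) auto

interpretation fscale: vector_space "fscale :: real \<Rightarrow> ('a set \<Rightarrow> real) \<Rightarrow> 'a set \<Rightarrow> real"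
  by unfold_locales (auto simp: fscale_def fun_eq_iff algebra_simps)

lemma chains_subset_span_indicators:
  assumes "finite (faces K i)"
  shows "chains K i \<subseteq> fscale.span ((\<lambda>F. indicator {F}) ` faces K i)"
proof
  fix c assume c: "c \<in> chains K i"
  have "c = (\<Sum>F\<in>faces K i. fscale (c F) (indicator {F}))"
    using c assms by (auto simp: fun_eq_iff sum_apply fscale_def indicator_def chains_def
        Int_insert_right)
  also have "\<dots> \<in> fscale.span ((\<lambda>F. indicator {F}) ` faces K i)"
    by (intro fscale.span_sum fscale.span_scale fscale.span_base) auto
  finally show "c \<in> fscale.span ((\<lambda>F. indicator {F}) ` faces K i)" .
qed

lemma chains_dim_eq_0_imp_subset_zero:
  assumes "V \<subseteq> chains K i" "finite (faces K i)" "fscale.dim V = 0"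
  shows "V \<subseteq> {0}"
  using fscale.dim_eq_0_imp_subset_zero[OF _ _ assms(3)] chains_subset_span_indicators[OF assms(2)]
    assms(1,2) by blast

section \<open>Faces of simplicial complexes\<close>

lemma facesD: "F \<in> faces K i \<Longrightarrow> F \<in> K \<and> finite F \<and> card F = Suc i"
  unfolding faces_def using card.infinite by fastforce

lemma faces_Diff_singleton: "faces (K - {F}) i = faces K i - {F}"
  unfolding faces_def by blast

lemma simplicial_complex_subset_closed:
  "simplicial_complex K \<Longrightarrow> F \<in> K \<Longrightarrow> G \<subseteq> F \<Longrightarrow> G \<in> K"
  unfolding simplicial_complex_def by blast

lemma finite_faces: "simplicial_complex K \<Longrightarrow> finite (faces K i)"
  unfolding simplicial_complex_def faces_def by auto

lemma pure_dim_ex_top_face_superset: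
  assumes "simplicial_complex K" "pure_dim K r" "X \<in> K"
  shows "\<exists>H\<in>faces K r. X \<subseteq> H"
proof -
  have "finite K"
    using assms(1) unfolding simplicial_complex_def by simp
  then obtain M where M: "M \<in> K" "X \<subseteq> M" "\<forall>G\<in>K. M \<subseteq> G \<longrightarrow> M = G"
    using finite_has_maximal2[OF _ assms(3)] by blast
  then have "M \<in> facets K"
    unfolding facets_def by auto
  with assms(2) M(1) have "M \<in> faces K r"
    unfolding pure_dim_def faces_def by auto
  with M(2) show ?thesis
    by blast
qed

lemma pure_dim_faces_above_empty:
  assumes "simplicial_complex K" "pure_dim K r"
  shows "faces K (Suc r) = {}"
proof (rule ccontr)
  assume "faces K (Suc r) \<noteq> {}"
  then obtain X where X: "X \<in> faces K (Suc r)" by auto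
  then obtain H where H: "H \<in> faces K r" "X \<subseteq> H"
    using pure_dim_ex_top_face_superset[OF assms] facesD by blast
  then have "card X \<le> card H"
    using facesD[OF H(1)] by (intro card_mono) auto
  with facesD[OF X] facesD[OF H(1)] show False
    by simp
qed

lemma subset_card_Suc_eq_Diff_singleton:
  assumes "X \<subseteq> F" "finite F" "card F = Suc (card X)"
  obtains x where "x \<in> F" "X = F - {x}"
proof -
  have "card (F - X) = 1"
    using assms card_Diff_subset[of X F] finite_subset by fastforce
  then obtain x where "F - X = {x}"
    using card_1_singletonE by blast
  with assms(1) show ?thesis
    using that by blast
qed

lemma up_neighborsI:
  assumes "H \<in> faces L (Suc i)" "X \<in> faces L i" "Y \<in> faces L i" "X \<subseteq> H" "Y \<subseteq> H" "X \<noteq> Y"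
  shows "up_neighbors L i X Y"
proof -
  have H: "finite H" "card H = Suc (Suc i)"
    using facesD[OF assms(1)] by auto
  have X: "finite X" "card X = Suc i" and Y: "finite Y" "card Y = Suc i"
    using facesD assms(2,3) by auto
  have "\<not> Y \<subseteq> X"
    using X Y assms(6) card_subset_eq[of X Y] by auto
  then have "card X < card (X \<union> Y)"
    using X Y by (intro psubset_card_mono) auto
  moreover have "card (X \<union> Y) \<le> card H"
    using assms(4,5) H by (intro card_mono) auto
  ultimately have "card (X \<union> Y) = card H"
    using X H by linarith
  then have "X \<union> Y = H"
    using H assms(4,5) by (intro card_subset_eq) auto
  with assms show ?thesis
    unfolding up_neighbors_def by auto
qed

lemma degree_eq_card_cofaces:
  assumes "F \<in> faces K i"
  shows "degree K F = card {H\<in>faces K (Suc i). F \<subseteq> H}"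
proof -
  have "card F = Suc i"
    using facesD[OF assms] by simp
  then have "{G \<in> K. F \<subseteq> G \<and> card G = card F + 1} = {H\<in>faces K (Suc i). F \<subseteq> H}"
    unfolding faces_def by auto
  then show ?thesis
    unfolding degree_def by simp
qed

section \<open>The boundary operator\<close>

lemma incidence_nonzero: "incidence F G \<noteq> 0"
  unfolding incidence_def by simp

lemma incidence_Diff_singleton:
  assumes "u \<in> H"
  shows "incidence H (H - {u}) = (-1) ^ card {w\<in>H. w < u}"
proof -
  have "H - (H - {u}) = {u}"
    using assms by auto
  then show ?thesis
    unfolding incidence_def by simp
qed

lemma faces_between_codim_2:
  assumes sc: "simplicial_complex K" and H: "H \<in> faces K (Suc (Suc i))"
    and "E \<subseteq> H" "H - E = {u, v}"
  shows "{X\<in>faces K (Suc i). E \<subseteq> X \<and> X \<subseteq> H} = {H - {u}, H - {v}}"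
proof
  have fH: "finite H" "card H = Suc (Suc (Suc i))" "H \<in> K"
    using facesD[OF H] by auto
  show "{X\<in>faces K (Suc i). E \<subseteq> X \<and> X \<subseteq> H} \<subseteq> {H - {u}, H - {v}}"
  proof
    fix X assume "X \<in> {X\<in>faces K (Suc i). E \<subseteq> X \<and> X \<subseteq> H}"
    then have X: "X \<in> faces K (Suc i)" "E \<subseteq> X" "X \<subseteq> H"
      by auto
    have "card H = Suc (card X)"
      using facesD[OF X(1)] fH(2) by simp
    then obtain x where x: "x \<in> H" "X = H - {x}"
      using subset_card_Suc_eq_Diff_singleton X(3) fH(1) by blast
    then have "x \<in> H - E"
      using X(2) by blast
    then have "x = u \<or> x = v"
      using assms(4) by blast
    then show "X \<in> {H - {u}, H - {v}}"
      using x by blast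
  qed
  have "u \<in> H" "v \<in> H" "u \<notin> E" "v \<notin> E"
    using assms(4) by auto
  then show "{H - {u}, H - {v}} \<subseteq> {X\<in>faces K (Suc i). E \<subseteq> X \<and> X \<subseteq> H}"
    using fH simplicial_complex_subset_closed[OF sc fH(3)] assms(3)
    unfolding faces_def by auto
qed

lemma incidence_products_cancel:
  assumes sc: "simplicial_complex K" and H: "H \<in> faces K (Suc (Suc i))" and E: "E \<in> faces K i"
  shows "(\<Sum>X\<in>{X\<in>faces K (Suc i). E \<subseteq> X \<and> X \<subseteq> H}. incidence X E * incidence H X) = 0"
proof (cases "E \<subseteq> H")
  case False
  then have "{X\<in>faces K (Suc i). E \<subseteq> X \<and> X \<subseteq> H} = {}"
    by blast
  then show ?thesis
    by (metis sum.empty)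
next
  case True
  have "card (H - E) = 2"
    using card_Diff_subset[OF _ True] facesD[OF H] facesD[OF E] by simp
  then obtain u v where "H - E = {u, v}" "u \<noteq> v"
    by (rule card_2_iff[THEN iffD1, elim_format]) blast
  then obtain u v where uv: "H - E = {u, v}" "u < v"
    by (metis insert_commute linorder_neq_iff)
  then have u: "u \<in> H" and v: "v \<in> H"
    by auto
  define a where "a = card {w\<in>H. w < u}"
  define b' where "b' = card ({w\<in>H. w < v} - {u})"
  \<comment> \<open>removing u first moves v one position to the front, so the two orders of removal
    contribute opposite signs\<close>
  have b: "card {w\<in>H. w < v} = Suc b'"
    unfolding b'_def using u uv(2) facesD[OF H] card_Suc_Diff1[of "{w\<in>H. w < v}" u] by auto
  have "{w \<in> H - {u}. w < v} = {w\<in>H. w < v} - {u}" "H - {u} - E = {v}"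
    using uv by auto
  then have i1: "incidence (H - {u}) E = (-1) ^ b'"
    unfolding incidence_def b'_def by (simp only: the_elem_eq)
  have "{w \<in> H - {v}. w < u} = {w\<in>H. w < u}" "H - {v} - E = {u}"
    using uv by auto
  then have i2: "incidence (H - {v}) E = (-1) ^ a"
    unfolding incidence_def a_def by (simp only: the_elem_eq)
  have i3: "incidence H (H - {u}) = (-1) ^ a" and i4: "incidence H (H - {v}) = (-1) ^ Suc b'"
    unfolding a_def b[symmetric] using incidence_Diff_singleton u v by blast+
  have "H - {u} \<noteq> H - {v}"
    using u v uv(2) by auto
  then show ?thesis
    unfolding faces_between_codim_2[OF sc H True uv(1)] using i1 i2 i3 i4
    by (simp add: power_add[symmetric] add.commute)
qed

lemma bd_bd:
  assumes sc: "simplicial_complex K"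
  shows "bd K i (bd K (Suc i) c) = (\<lambda>_. 0)"
proof
  fix E
  show "bd K i (bd K (Suc i) c) E = 0"
  proof (cases "E \<in> faces K i")
    case False
    then show ?thesis by (simp add: bd_def)
  next
    case True
    let ?A = "{X\<in>faces K (Suc i). E \<subseteq> X}"
    let ?B = "faces K (Suc (Suc i))"
    have "bd K i (bd K (Suc i) c) E
       = (\<Sum>X\<in>?A. incidence X E * (\<Sum>H\<in>{H\<in>?B. X \<subseteq> H}. incidence H X * c H))"
      using True unfolding bd_def by (auto intro!: sum.cong)
    also have "\<dots> = (\<Sum>X\<in>?A. \<Sum>H\<in>{H\<in>?B. X \<subseteq> H}. incidence X E * incidence H X * c H)"
      by (simp add: sum_distrib_left mult.assoc)
    also have "\<dots> = (\<Sum>H\<in>?B. \<Sum>X\<in>{X\<in>?A. X \<subseteq> H}. incidence X E * incidence H X * c H)"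
      by (rule sum.swap_restrict) (use finite_faces[OF sc] in auto)
    also have "\<dots> = (\<Sum>H\<in>?B. (\<Sum>X\<in>{X\<in>faces K (Suc i). E \<subseteq> X \<and> X \<subseteq> H}.
                              incidence X E * incidence H X) * c H)"
      by (simp add: sum_distrib_right conj_assoc)
    also have "\<dots> = 0"
      using incidence_products_cancel[OF sc _ True] by simp
    finally show ?thesis .
  qed
qed

lemma bd_restrict:
  assumes "simplicial_complex K" "G \<in> faces K i"
  shows "bd K i (\<lambda>H. if H \<in> T then c H else 0) G
    = (\<Sum>H\<in>{H\<in>faces K (Suc i). G \<subseteq> H} \<inter> T. incidence H G * c H)"
  using assms finite_faces[OF assms(1)]
  by (simp add: bd_def sum.inter_restrict if_distrib cong: if_cong)

lemma cycle_supported_on_simplex_nonzero: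
  assumes sc: "simplicial_complex K" and S: "S \<in> faces K (Suc (Suc i))"
    and cycle: "bd K i c = (\<lambda>_. 0)" and supp: "\<And>X. \<not> X \<subseteq> S \<Longrightarrow> c X = 0"
    and G: "G \<in> faces K (Suc i)" "G \<subseteq> S" "c G \<noteq> 0"
    and G': "G' \<in> faces K (Suc i)" "G' \<subseteq> S"
  shows "c G' \<noteq> 0"
proof
  assume c': "c G' = 0"
  have fS: "finite S" "card S = Suc (Suc (Suc i))" "S \<in> K"
    using facesD[OF S] by auto
  obtain g where g: "g \<in> S" "G = S - {g}"
    using subset_card_Suc_eq_Diff_singleton[OF G(2) fS(1)] facesD[OF G(1)] fS(2) by auto
  obtain g' where g': "g' \<in> S" "G' = S - {g'}"
    using subset_card_Suc_eq_Diff_singleton[OF G'(2) fS(1)] facesD[OF G'(1)] fS(2) by auto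
  have "G \<noteq> G'"
    using G(3) c' by auto
  then have "g \<noteq> g'"
    using g g' by auto
  define E where "E = S - {g, g'}"
  have "card E = Suc i"
    unfolding E_def using g g' \<open>g \<noteq> g'\<close> fS by (simp add: card_Diff_subset)
  moreover have "E \<in> K"
    unfolding E_def using simplicial_complex_subset_closed[OF sc fS(3)] by blast
  ultimately have E: "E \<in> faces K i"
    unfolding faces_def by simp
  have between: "{X\<in>faces K (Suc i). E \<subseteq> X \<and> X \<subseteq> S} = {G, G'}"
    using faces_between_codim_2[OF sc S, of E g g'] g g' unfolding E_def by auto
  have "0 = bd K i c E"
    using fun_cong[OF cycle] by simp
  also have "\<dots> = (\<Sum>X\<in>{X\<in>faces K (Suc i). E \<subseteq> X}. incidence X E * c X)"
    using E by (simp add: bd_def)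
  also have "\<dots> = (\<Sum>X\<in>{X\<in>faces K (Suc i). E \<subseteq> X \<and> X \<subseteq> S}. incidence X E * c X)"
    using finite_faces[OF sc] supp by (intro sum.mono_neutral_right) auto
  also have "\<dots> = incidence G E * c G"
    unfolding between using \<open>G \<noteq> G'\<close> c' by simp
  finally show False
    using incidence_nonzero[of G E] G(3) by simp
qed

lemma cycles_iff: "0 < i \<Longrightarrow> c \<in> cycles L i \<longleftrightarrow> c \<in> chains L i \<and> bd L (i - 1) c = (\<lambda>_. 0)"
  unfolding cycles_def by auto

lemma bd_Diff_singleton:
  assumes "finite K" "c F = 0"
  shows "bd (K - {F}) j c G = (if G = F then 0 else bd K j c G)"
proof -
  have "finite {H\<in>faces K (Suc j). G \<subseteq> H}"
    using assms(1) unfolding faces_def by simp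
  moreover have "{H\<in>faces K (Suc j) - {F}. G \<subseteq> H} = {H\<in>faces K (Suc j). G \<subseteq> H} - {F}"
    by blast
  ultimately show ?thesis
    using assms(2) by (simp add: bd_def faces_Diff_singleton sum_diff1)
qed

lemma cycle_Diff_singleton:
  assumes "finite K" "c \<in> cycles K i" "c F = 0"
  shows "c \<in> cycles (K - {F}) i"
proof -
  have "c \<in> chains (K - {F}) i"
    using assms(2,3) by (auto simp: cycles_def chains_def faces_Diff_singleton)
  moreover have "i = 0 \<or> bd (K - {F}) (i - 1) c = (\<lambda>_. 0)"
    using assms(2) bd_Diff_singleton[of K c F] assms(1,3) by (auto simp: cycles_def fun_eq_iff)
  ultimately show ?thesis
    unfolding cycles_def by blast
qed

lemma betti_eq_dim_cycles:
  assumes "faces L (Suc r) = {}"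
  shows "betti L r = fscale.dim (cycles L r)"
proof -
  have "chains L (Suc r) = {0}"
    using assms by (auto simp: chains_def fun_eq_iff)
  then have "boundaries L r = {0}"
    unfolding boundaries_def by (auto simp: bd_def fun_eq_iff)
  then show ?thesis
    unfolding betti_def by (simp add: fscale.dim_zero_singleton)
qed

section \<open>Connectivity through shared faces\<close>

definition down_adjacent :: "'a set set \<Rightarrow> nat \<Rightarrow> 'a set \<Rightarrow> 'a set \<Rightarrow> bool" where
  "down_adjacent L i H H' \<longleftrightarrow>
     H \<in> faces L (Suc i) \<and> H' \<in> faces L (Suc i) \<and> (\<exists>G\<in>faces L i. G \<subseteq> H \<and> G \<subseteq> H')"

lemma symp_down_adjacent: "symp (down_adjacent L i)"
  unfolding symp_def down_adjacent_def by blast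

lemma up_neighbors_path_of_rtranclp:
  assumes "(up_neighbors L i)\<^sup>*\<^sup>* F G" "F \<in> faces L i"
  shows "\<exists>ps. ps \<noteq> [] \<and> hd ps = F \<and> last ps = G \<and> set ps \<subseteq> faces L i \<and>
     (\<forall>j. Suc j < length ps \<longrightarrow> up_neighbors L i (ps ! j) (ps ! Suc j))"
  using assms(1)
proof (induction rule: rtranclp_induct)
  case base
  then show ?case
    using assms(2) by (intro exI[of _ "[F]"]) auto
next
  case (step G G')
  then obtain ps where ps: "ps \<noteq> []" "hd ps = F" "last ps = G" "set ps \<subseteq> faces L i"
     "\<forall>j. Suc j < length ps \<longrightarrow> up_neighbors L i (ps ! j) (ps ! Suc j)"
    by blast
  have "G' \<in> faces L i"
    using step(2) unfolding up_neighbors_def by blast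
  moreover have "up_neighbors L i ((ps @ [G']) ! j) ((ps @ [G']) ! Suc j)"
    if "Suc j < length (ps @ [G'])" for j
  proof (cases "Suc j < length ps")
    case True
    then show ?thesis
      using ps(5) by (simp add: nth_append)
  next
    case False
    with that have "j = length ps - 1"
      by simp
    with ps(1,3) have "(ps @ [G']) ! j = G" "(ps @ [G']) ! Suc j = G'"
      by (auto simp: nth_append last_conv_nth)
    then show ?thesis
      using step(2) by simp
  qed
  ultimately show ?case
    using ps by (intro exI[of _ "ps @ [G']"]) auto
qed

lemma rtranclp_up_neighbors_of_down_adjacent:
  assumes "(down_adjacent L i)\<^sup>*\<^sup>* H0 H1" "H0 \<in> faces L (Suc i)" "F \<in> faces L i" "F \<subseteq> H0"
    and "X \<in> faces L i" "X \<subseteq> H1"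
  shows "(up_neighbors L i)\<^sup>*\<^sup>* F X"
  using assms(1,5,6)
proof (induction arbitrary: X rule: rtranclp_induct)
  case base
  then show ?case
    using up_neighborsI[OF assms(2,3) _ assms(4)] by (cases "F = X") auto
next
  case (step H H')
  then obtain G where G: "G \<in> faces L i" "G \<subseteq> H" "G \<subseteq> H'" and H': "H' \<in> faces L (Suc i)"
    unfolding down_adjacent_def by blast
  then have "(up_neighbors L i)\<^sup>*\<^sup>* F G"
    using step.IH by blast
  moreover have "G = X \<or> up_neighbors L i G X"
    using up_neighborsI[OF H' G(1) step.prems(1) G(3) step.prems(2)] by blast
  ultimately show ?case
    by (auto intro: rtranclp.rtrancl_into_rtrancl)
qed

lemma path_connected_i_if_down_connected:
  assumes "\<And>F. F \<in> faces L i \<Longrightarrow> \<exists>H\<in>faces L (Suc i). F \<subseteq> H"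
    and "\<And>H H'. H \<in> faces L (Suc i) \<Longrightarrow> H' \<in> faces L (Suc i) \<Longrightarrow> (down_adjacent L i)\<^sup>*\<^sup>* H H'"
  shows "path_connected_i L i"
  unfolding path_connected_i_def
proof (intro ballI)
  fix F G assume F: "F \<in> faces L i" and G: "G \<in> faces L i"
  obtain HF HG where "HF \<in> faces L (Suc i)" "F \<subseteq> HF" "HG \<in> faces L (Suc i)" "G \<subseteq> HG"
    using assms(1) F G by blast
  then have "(up_neighbors L i)\<^sup>*\<^sup>* F G"
    using rtranclp_up_neighbors_of_down_adjacent assms(2) F G by blast
  then show "\<exists>ps. ps \<noteq> [] \<and> hd ps = F \<and> last ps = G \<and> set ps \<subseteq> faces L i \<and>
      (\<forall>j. Suc j < length ps \<longrightarrow> up_neighbors L i (ps ! j) (ps ! Suc j))"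
    using up_neighbors_path_of_rtranclp F by blast
qed

section \<open>Basic holes\<close>

locale basic_hole_complex =
  fixes K :: "'a::linorder set set" and r :: nat
  assumes basic_hole: "basic_hole K r" and dim_pos: "0 < r"
begin

lemma simplicial_complex: "simplicial_complex K"
  and pure: "pure_dim K r"
  and betti_top: "betti K r = 1"
  and betti_remove_top_face: "F \<in> faces K r \<Longrightarrow> betti (K - {F}) r = 0"
  using basic_hole unfolding basic_hole_def by auto

text \<open>Stated with Suc 0, which is the simp normal form of r - 1.\<close>

lemma Suc_dim_pred [simp]: "Suc (r - Suc 0) = r"
  using dim_pos by simp

lemma finite_faces_K: "finite (faces K i)"
  using finite_faces[OF simplicial_complex] .

lemma faces_above_empty: "faces K (Suc r) = {}"
  using pure_dim_faces_above_empty[OF simplicial_complex pure] .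

definition hole_cycle :: "'a set \<Rightarrow> real" where
  "hole_cycle = (SOME z. z \<in> cycles K r \<and> z \<noteq> 0 \<and> (\<forall>v\<in>cycles K r. \<exists>a. v = fscale a z))"

lemma hole_cycle:
  shows hole_cycle_in_cycles: "hole_cycle \<in> cycles K r"
    and hole_cycle_neq_0: "hole_cycle \<noteq> 0"
    and cycle_multiple_hole_cycle: "\<And>v. v \<in> cycles K r \<Longrightarrow> \<exists>a. v = fscale a hole_cycle"
proof -
  have "fscale.dim (cycles K r) = 1"
    using betti_top betti_eq_dim_cycles[OF faces_above_empty] by simp
  then obtain z where "z \<in> cycles K r" "z \<noteq> 0" "\<forall>v\<in>cycles K r. \<exists>a. v = fscale a z"
    using fscale.dim_eq_1_imp_generator by metis
  then have "\<exists>z. z \<in> cycles K r \<and> z \<noteq> 0 \<and> (\<forall>v\<in>cycles K r. \<exists>a. v = fscale a z)"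
    by blast
  from someI_ex[OF this] show "hole_cycle \<in> cycles K r" "hole_cycle \<noteq> 0"
    "\<And>v. v \<in> cycles K r \<Longrightarrow> \<exists>a. v = fscale a hole_cycle"
    unfolding hole_cycle_def by blast+
qed

lemma bd_hole_cycle:
  assumes "G \<in> faces K (r - 1)"
  shows "(\<Sum>H\<in>{H\<in>faces K r. G \<subseteq> H}. incidence H G * hole_cycle H) = 0"
proof -
  have "bd K (r - 1) hole_cycle G = 0"
    using hole_cycle_in_cycles cycles_iff[OF dim_pos] by metis
  then show ?thesis
    using assms unfolding bd_def by simp
qed

lemma hole_cycle_nonzero:
  assumes F: "F \<in> faces K r"
  shows "hole_cycle F \<noteq> 0"
proof
  assume "hole_cycle F = 0"
  then have "hole_cycle \<in> cycles (K - {F}) r"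
    using cycle_Diff_singleton hole_cycle_in_cycles simplicial_complex
    unfolding simplicial_complex_def by blast
  moreover have "fscale.dim (cycles (K - {F}) r) = 0"
    using betti_remove_top_face[OF F] betti_eq_dim_cycles[of "K - {F}" r] faces_above_empty
    by (simp add: faces_Diff_singleton)
  moreover have "cycles (K - {F}) r \<subseteq> chains (K - {F}) r"
    unfolding cycles_def by blast
  moreover have "finite (faces (K - {F}) r)"
    using finite_faces_K by (simp add: faces_Diff_singleton)
  ultimately have "hole_cycle = 0"
    using chains_dim_eq_0_imp_subset_zero by blast
  with hole_cycle_neq_0 show False ..
qed

lemma closed_set_of_top_faces_eq:
  assumes T: "T \<subseteq> faces K r" "T \<noteq> {}"
    and closed: "\<And>G H H'. G \<in> faces K (r - 1) \<Longrightarrow> H \<in> T \<Longrightarrow> H' \<in> faces K r \<Longrightarrow>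
      G \<subseteq> H \<Longrightarrow> G \<subseteq> H' \<Longrightarrow> H' \<in> T"
  shows "T = faces K r"
proof -
  define w where "w = (\<lambda>H. if H \<in> T then hole_cycle H else 0)"
  have "bd K (r - 1) w G = 0" for G
  proof (cases "G \<in> faces K (r - 1)")
    case False
    then show ?thesis by (simp add: bd_def)
  next
    case G: True
    show ?thesis
    proof (cases "\<exists>H\<in>T. G \<subseteq> H")
      case True
      then have "{H\<in>faces K r. G \<subseteq> H} \<inter> T = {H\<in>faces K r. G \<subseteq> H}"
        using closed[OF G] by blast
      then show ?thesis
        using bd_restrict[OF simplicial_complex G] bd_hole_cycle[OF G] unfolding w_def by simp
    next
      case False
      then have "{H\<in>faces K r. G \<subseteq> H} \<inter> T = {}"
        by blast
      then show ?thesis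
        using bd_restrict[OF simplicial_complex G] unfolding w_def by simp
    qed
  qed
  moreover have "w \<in> chains K r"
    using T(1) unfolding w_def chains_def by auto
  ultimately have "w \<in> cycles K r"
    using cycles_iff[OF dim_pos] by blast
  then obtain a where a: "w = fscale a hole_cycle"
    using cycle_multiple_hole_cycle by blast
  obtain H0 where H0: "H0 \<in> T"
    using T(2) by blast
  then have "hole_cycle H0 = a * hole_cycle H0"
    using fun_cong[OF a, of H0] unfolding w_def fscale_def by simp
  then have "a = 1"
    using hole_cycle_nonzero H0 T(1) by auto
  then have "H \<in> T" if "H \<in> faces K r" for H
    using fun_cong[OF a, of H] hole_cycle_nonzero[OF that] unfolding w_def fscale_def
    by (auto split: if_splits)
  with T(1) show ?thesis
    by blast
qed

lemma down_adjacent_top_faces_connected: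
  assumes "H0 \<in> faces K r" "H1 \<in> faces K r"
  shows "(down_adjacent K (r - 1))\<^sup>*\<^sup>* H0 H1"
proof -
  define T where "T = {H. (down_adjacent K (r - 1))\<^sup>*\<^sup>* H0 H}"
  have "T \<subseteq> faces K r"
  proof
    fix H assume "H \<in> T"
    then have "(down_adjacent K (r - 1))\<^sup>*\<^sup>* H0 H"
      unfolding T_def by simp
    then show "H \<in> faces K r"
      by (induction rule: rtranclp_induct) (use assms(1) in \<open>auto simp: down_adjacent_def\<close>)
  qed
  moreover have "H0 \<in> T"
    unfolding T_def by simp
  moreover have "H' \<in> T"
    if "G \<in> faces K (r - 1)" "H \<in> T" "H' \<in> faces K r" "G \<subseteq> H" "G \<subseteq> H'" for G H H'
  proof -
    have "down_adjacent K (r - 1) H H'"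
      using that \<open>T \<subseteq> faces K r\<close> unfolding down_adjacent_def by auto
    with \<open>H \<in> T\<close> show ?thesis
      unfolding T_def by (auto intro: rtranclp.rtrancl_into_rtrancl)
  qed
  ultimately have "T = faces K r"
    by (intro closed_set_of_top_faces_eq) auto
  with assms(2) show ?thesis
    unfolding T_def by blast
qed

theorem path_connected_ridges: "path_connected_i K (r - 1)"
proof (rule path_connected_i_if_down_connected)
  show "\<exists>H\<in>faces K (Suc (r - 1)). F \<subseteq> H" if "F \<in> faces K (r - 1)" for F
    using pure_dim_ex_top_face_superset[OF simplicial_complex pure] facesD[OF that] by simp
  show "(down_adjacent K (r - 1))\<^sup>*\<^sup>* H H'"
    if "H \<in> faces K (Suc (r - 1))" "H' \<in> faces K (Suc (r - 1))" for H H'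
    using down_adjacent_top_faces_connected that by simp
qed

theorem degree_ridge_ge_2:
  assumes F: "F \<in> faces K (r - 1)"
  shows "2 \<le> degree K F"
proof (rule ccontr)
  let ?C = "{H\<in>faces K r. F \<subseteq> H}"
  assume "\<not> 2 \<le> degree K F"
  then have "card ?C < 2"
    using degree_eq_card_cofaces[OF F] by simp
  moreover have "?C \<noteq> {}"
    using pure_dim_ex_top_face_superset[OF simplicial_complex pure] facesD[OF F] by auto
  then have "card ?C \<noteq> 0"
    using finite_faces_K by simp
  ultimately have "card ?C = 1"
    by linarith
  then obtain H where H: "?C = {H}"
    using card_1_singletonE by blast
  then have "incidence H F * hole_cycle H = 0"
    using bd_hole_cycle[OF F] by simp
  moreover have "H \<in> faces K r"
    using H by auto
  ultimately show False
    using hole_cycle_nonzero incidence_nonzero[of H F] by simp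
qed

lemma ridges_remove_top_face:
  assumes "Fb \<in> faces K r"
  shows "faces (K - {Fb}) (r - 1) = faces K (r - 1)"
  using facesD[OF assms] dim_pos by (auto simp: faces_Diff_singleton dest: facesD)

lemma down_adjacent_remove_top_face_iff:
  assumes "Fb \<in> faces K r"
  shows "down_adjacent (K - {Fb}) (r - 1) H H' \<longleftrightarrow>
    H \<in> faces K r - {Fb} \<and> H' \<in> faces K r - {Fb} \<and> (\<exists>G\<in>faces K (r - 1). G \<subseteq> H \<and> G \<subseteq> H')"
  using ridges_remove_top_face[OF assms] by (simp add: down_adjacent_def faces_Diff_singleton)

context
  fixes Fb T
  assumes Fb: "Fb \<in> faces K r"
    and T: "T \<subseteq> faces K r - {Fb}" "T \<noteq> {}"
    and T_closed: "\<And>G H H'. G \<in> faces K (r - 1) \<Longrightarrow> H \<in> T \<Longrightarrow> H' \<in> faces K r - {Fb} \<Longrightarrow>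
      G \<subseteq> H \<Longrightarrow> G \<subseteq> H' \<Longrightarrow> H' \<in> T"
begin

lemma ex_ridge_of_removed_face_meeting:
  "\<exists>G\<in>faces K (r - 1). G \<subseteq> Fb \<and> (\<exists>H\<in>T. G \<subseteq> H)"
proof (rule ccontr)
  assume none: "\<not> ?thesis"
  have "T = faces K r"
  proof (rule closed_set_of_top_faces_eq)
    show "T \<subseteq> faces K r" "T \<noteq> {}"
      using T by auto
    show "H' \<in> T" if "G \<in> faces K (r - 1)" "H \<in> T" "H' \<in> faces K r" "G \<subseteq> H" "G \<subseteq> H'"
      for G H H'
      using that none T_closed[of G H H'] by blast
  qed
  with Fb T(1) show False
    by blast
qed

lemma bd_restricted_hole_cycle:
  assumes X: "X \<in> faces K (r - 1)"
  shows "bd K (r - 1) (\<lambda>H. if H \<in> T then hole_cycle H else 0) X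
    = (if X \<subseteq> Fb \<and> (\<exists>H\<in>T. X \<subseteq> H) then - (incidence Fb X * hole_cycle Fb) else 0)"
proof (cases "\<exists>H\<in>T. X \<subseteq> H")
  case True
  then have "{H\<in>faces K r. X \<subseteq> H} \<inter> T = {H\<in>faces K r. X \<subseteq> H} - {Fb}"
    using T(1) T_closed[OF X] by blast
  then have "bd K (r - 1) (\<lambda>H. if H \<in> T then hole_cycle H else 0) X
      = (\<Sum>H\<in>{H\<in>faces K r. X \<subseteq> H} - {Fb}. incidence H X * hole_cycle H)"
    using bd_restrict[OF simplicial_complex X] by simp
  also have "\<dots> = - (if X \<subseteq> Fb then incidence Fb X * hole_cycle Fb else 0)"
    using bd_hole_cycle[OF X] Fb finite_faces_K by (simp add: sum_diff1)
  finally show ?thesis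
    using True by simp
next
  case False
  then have "{H\<in>faces K r. X \<subseteq> H} \<inter> T = {}"
    by blast
  then show ?thesis
    using bd_restrict[OF simplicial_complex X] False by simp
qed

lemma ridge_of_removed_face_meeting:
  assumes "2 \<le> r" and G': "G' \<in> faces K (r - 1)" "G' \<subseteq> Fb"
  shows "\<exists>H\<in>T. G' \<subseteq> H"
proof (rule ccontr)
  assume G'_apart: "\<not> ?thesis"
  let ?w = "\<lambda>H. if H \<in> T then hole_cycle H else 0"
  let ?c = "bd K (r - 1) ?w"
  have idx: "Suc (r - 2) = r - 1" "Suc (Suc (r - 2)) = r"
    using assms(1) by auto
  obtain G where G: "G \<in> faces K (r - 1)" "G \<subseteq> Fb" "\<exists>H\<in>T. G \<subseteq> H"
    using ex_ridge_of_removed_face_meeting by blast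
  have "bd K (r - 2) ?c = (\<lambda>_. 0)"
    using bd_bd[OF simplicial_complex, of "r - 2" ?w] unfolding idx .
  moreover have "?c X = 0" if "\<not> X \<subseteq> Fb" for X
  proof (cases "X \<in> faces K (r - 1)")
    case True
    then show ?thesis
      using bd_restricted_hole_cycle[OF True] that by simp
  next
    case False
    then show ?thesis
      by (simp add: bd_def)
  qed
  moreover have "?c G = - (incidence Fb G * hole_cycle Fb)"
    using bd_restricted_hole_cycle[OF G(1)] G(2,3) by simp
  then have "?c G \<noteq> 0"
    using incidence_nonzero[of Fb G] hole_cycle_nonzero[OF Fb] by simp
  moreover have "Fb \<in> faces K (Suc (Suc (r - 2)))" "G \<in> faces K (Suc (r - 2))"
    "G' \<in> faces K (Suc (r - 2))"
    using Fb G(1) G'(1) unfolding idx by auto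
  ultimately have "?c G' \<noteq> 0"
    using cycle_supported_on_simplex_nonzero[OF simplicial_complex] G(2) G'(2) by blast
  moreover have "?c G' = 0"
    using bd_restricted_hole_cycle[OF G'(1)] G'_apart by simp
  ultimately show False
    by contradiction
qed

end

lemma down_adjacent_remove_top_face_connected:
  assumes "2 \<le> r" and Fb: "Fb \<in> faces K r"
    and "H0 \<in> faces K r - {Fb}" "H1 \<in> faces K r - {Fb}"
  shows "(down_adjacent (K - {Fb}) (r - 1))\<^sup>*\<^sup>* H0 H1"
proof -
  let ?R = "down_adjacent (K - {Fb}) (r - 1)"
  have Fb': "Fb \<in> K" "finite Fb" "card Fb = Suc r"
    using facesD[OF Fb] by auto
  then obtain x where x: "x \<in> Fb"
    by (metis card.empty ex_in_conv nat.distinct(1))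
  define G where "G = Fb - {x}"
  have "G \<in> K"
    using simplicial_complex_subset_closed[OF simplicial_complex Fb'(1)] unfolding G_def by blast
  moreover have "card G = Suc (r - 1)"
    using Fb' x unfolding G_def by simp
  ultimately have G: "G \<in> faces K (r - 1)" "G \<subseteq> Fb"
    unfolding G_def faces_def by auto
  have reach: "\<exists>H. ?R\<^sup>*\<^sup>* H0' H \<and> H \<in> faces K r - {Fb} \<and> G \<subseteq> H"
    if H0': "H0' \<in> faces K r - {Fb}" for H0'
  proof -
    define T where "T = {H. ?R\<^sup>*\<^sup>* H0' H}"
    have T_sub: "T \<subseteq> faces K r - {Fb}"
    proof
      fix H assume "H \<in> T"
      then have "?R\<^sup>*\<^sup>* H0' H"
        unfolding T_def by simp
      then show "H \<in> faces K r - {Fb}"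
        by (induction rule: rtranclp_induct)
          (use H0' down_adjacent_remove_top_face_iff[OF Fb] in auto)
    qed
    moreover have "T \<noteq> {}"
      unfolding T_def by auto
    moreover have "H' \<in> T"
      if "G \<in> faces K (r - 1)" "H \<in> T" "H' \<in> faces K r - {Fb}" "G \<subseteq> H" "G \<subseteq> H'" for G H H'
    proof -
      have "?R H H'"
        using that T_sub down_adjacent_remove_top_face_iff[OF Fb] by blast
      with \<open>H \<in> T\<close> show ?thesis
        unfolding T_def by (auto intro: rtranclp.rtrancl_into_rtrancl)
    qed
    ultimately obtain H where "H \<in> T" "G \<subseteq> H"
      using ridge_of_removed_face_meeting[OF Fb, of T] assms(1) G by blast
    with T_sub show ?thesis
      unfolding T_def by blast
  qed
  obtain H where H: "?R\<^sup>*\<^sup>* H0 H" "H \<in> faces K r - {Fb}" "G \<subseteq> H"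
    using reach[OF assms(3)] by blast
  obtain H' where H': "?R\<^sup>*\<^sup>* H1 H'" "H' \<in> faces K r - {Fb}" "G \<subseteq> H'"
    using reach[OF assms(4)] by blast
  have "?R H H'"
    using H H' G down_adjacent_remove_top_face_iff[OF Fb] by blast
  moreover have "?R\<^sup>*\<^sup>* H' H1"
    using sympD[OF symp_rtranclp[OF symp_down_adjacent] H'(1)] .
  ultimately show ?thesis
    using H(1) by (meson rtranclp.rtrancl_into_rtrancl rtranclp_trans)
qed

theorem path_connected_remove_top_face:
  assumes "2 \<le> r" and Fb: "Fb \<in> faces K r"
  shows "path_connected_i (K - {Fb}) (r - 1)"
proof (rule path_connected_i_if_down_connected)
  have tops: "faces (K - {Fb}) (Suc (r - 1)) = faces K r - {Fb}"
    by (simp add: faces_Diff_singleton)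
  show "\<exists>H\<in>faces (K - {Fb}) (Suc (r - 1)). F \<subseteq> H" if "F \<in> faces (K - {Fb}) (r - 1)" for F
  proof -
    have F: "F \<in> faces K (r - 1)"
      using that ridges_remove_top_face[OF Fb] by simp
    have "2 \<le> card {H\<in>faces K r. F \<subseteq> H}"
      using degree_ridge_ge_2[OF F] degree_eq_card_cofaces[OF F] by simp
    then have "\<not> {H\<in>faces K r. F \<subseteq> H} \<subseteq> {Fb}"
      using card_mono[of "{Fb}" "{H\<in>faces K r. F \<subseteq> H}"] by fastforce
    then show ?thesis
      unfolding tops by blast
  qed
  show "(down_adjacent (K - {Fb}) (r - 1))\<^sup>*\<^sup>* H H'"
    if "H \<in> faces (K - {Fb}) (Suc (r - 1))" "H' \<in> faces (K - {Fb}) (Suc (r - 1))" for H H'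
    using down_adjacent_remove_top_face_connected[OF assms] that unfolding tops by blast
qed

end

theorem mainTheorem2:
  fixes K :: "'a::linorder set set" and r :: nat
  assumes "r \<ge> 2" and "basic_hole K r"
  shows "path_connected_i K (r - 1)
    \<and> (\<forall>F\<in>faces K (r - 1). degree K F \<ge> 2)
    \<and> (\<forall>F\<in>faces K r. path_connected_i (K - {F}) (r - 1))"
proof -
  interpret basic_hole_complex K r
    using assms by unfold_locales auto
  show ?thesis
    using path_connected_ridges degree_ridge_ge_2 path_connected_remove_top_face assms(1) by blast
qed

end
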